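(* Let $n=(2k+1)^2$ be an odd square ($k\geq 0$ an integer). (i) There exists a graph $H_1$ of order $n$ such that $\chi_{\mathrm{so}}(H_1)=\sqrt{n}$ and $\chi_{\mathrm{so}}(\overline{H_1})=\sqrt{n}$. (ii) There exists a graph $H_2$ of order $n$ such that $\chi_{\mathrm{so}}(H_2)=n$ and $\chi_{\mathrm{so}}(\overline{H_2})=n$. (iii) For every graph $G$ on $n$ vertices, $2\sqrt{n}\leq \chi_{\mathrm{so}}(G)+\chi_{\mathrm{so}}(\overline{G})\leq 2n$ and $n\leq \chi_{\mathrm{so}}(G)\cdot\chi_{\mathrm{so}}(\overline{G})\leq n^2$, and all four of these inequalities are attained with equality by some graph on $n$ vertices.
   Context: All graphs are finite, simple and undirected; $\overline{G}$ denotes the complement of $G$. A strong odd coloring of a graph $G$ is a proper vertex coloring of $G$ such that for every non-isolated vertex $v$ and every color $c$, either no vertex of the open neighborhood $N_G(v)$ has color $c$, or color $c$ is used on an odd number of vertices of $N_G(v)$; $\chi_{\mathrm{so}}(G)$ is the minimum number of colors in such a coloring. *)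

theory Defs
  imports Main
begin

definition simple_graph :: "'a set \<Rightarrow> ('a \<Rightarrow> 'a \<Rightarrow> bool) \<Rightarrow> bool" where
  "simple_graph V E \<longleftrightarrow> finite V \<and>
     (\<forall>u v. E u v \<longrightarrow> u \<in> V \<and> v \<in> V) \<and>
     (\<forall>u v. E u v \<longrightarrow> E v u) \<and>
     (\<forall>v. \<not> E v v)"

definition graph_compl :: "'a set \<Rightarrow> ('a \<Rightarrow> 'a \<Rightarrow> bool) \<Rightarrow> ('a \<Rightarrow> 'a \<Rightarrow> bool)" where
  "graph_compl V E = (\<lambda>u v. u \<in> V \<and> v \<in> V \<and> u \<noteq> v \<and> \<not> E u v)"

definition nbhd :: "'a set \<Rightarrow> ('a \<Rightarrow> 'a \<Rightarrow> bool) \<Rightarrow> 'a \<Rightarrow> 'a set" where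
  "nbhd V E v = {u \<in> V. E v u}"

definition strong_odd_coloring :: "'a set \<Rightarrow> ('a \<Rightarrow> 'a \<Rightarrow> bool) \<Rightarrow> ('a \<Rightarrow> nat) \<Rightarrow> bool" where
  "strong_odd_coloring V E col \<longleftrightarrow>
     (\<forall>u\<in>V. \<forall>v\<in>V. E u v \<longrightarrow> col u \<noteq> col v) \<and>
     (\<forall>v\<in>V. nbhd V E v \<noteq> {} \<longrightarrow>
        (\<forall>c. {u \<in> nbhd V E v. col u = c} = {} \<or> odd (card {u \<in> nbhd V E v. col u = c})))"

definition chi_so :: "'a set \<Rightarrow> ('a \<Rightarrow> 'a \<Rightarrow> bool) \<Rightarrow> nat" where
  "chi_so V E = (LEAST m. \<exists>col. strong_odd_coloring V E col \<and> card (col ` V) = m)"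

end

theory Submission
  imports Defs
begin

text \<open>Colourings of $G$ and of $\overline{G}$ taken together are injective on the vertices,
  since two vertices with the same pair of colours would be adjacent in neither graph; hence
  $\chi_{so}(G)\,\chi_{so}(\overline{G}) \geq n$, and the sum bound follows by AM-GM. Injective
  colourings give the upper bounds. The extremal graphs live on the $m \times m$ grid,
  $m = 2k+1$: the union of the rows as cliques and its complement are coloured by columns and by
  rows respectively, so both have $\chi_{so} \le m$; for the rook graph and its complement
  every strong odd colouring turns out to be injective.\<close>

lemma four_mult_le_square_add:
  fixes a b :: nat
  shows "4 * (a * b) \<le> (a + b)\<^sup>2"
proof -
  have "0 \<le> (int a - int b)\<^sup>2" by simp
  then have "int (4 * (a * b)) \<le> int ((a + b)\<^sup>2)"
    by (simp add: power2_eq_square algebra_simps)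
  then show ?thesis by linarith
qed

lemma double_le_add_if_square_le_mult:
  fixes a b m :: nat
  assumes "m * m \<le> a * b"
  shows "2 * m \<le> a + b"
proof (rule power2_le_imp_le)
  have "(2 * m)\<^sup>2 \<le> 4 * (a * b)" using assms by (simp add: power2_eq_square)
  also have "\<dots> \<le> (a + b)\<^sup>2" by (rule four_mult_le_square_add)
  finally show "(2 * m)\<^sup>2 \<le> (a + b)\<^sup>2" .
qed simp

lemma eq_if_square_le_mult:
  fixes a b m :: nat
  assumes "a \<le> m" "b \<le> m" "m * m \<le> a * b"
  shows "a = m \<and> b = m"
proof -
  have "a * b \<le> a * m" "a * m \<le> m * m" "a * b \<le> m * b" "m * b \<le> m * m"
    using assms(1,2) by simp_all
  then have "a * m = m * m" "m * b = m * m" using assms(3) by linarith+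
  then show ?thesis using assms(1,2) by (cases "m = 0") simp_all
qed

lemma strong_odd_coloring_proper:
  assumes "strong_odd_coloring V E col" "u \<in> V" "v \<in> V" "E u v"
  shows "col u \<noteq> col v"
  using assms unfolding strong_odd_coloring_def by blast

lemma strong_odd_coloring_odd:
  assumes "strong_odd_coloring V E col" "v \<in> V" "{u \<in> nbhd V E v. col u = c} \<noteq> {}"
  shows "odd (card {u \<in> nbhd V E v. col u = c})"
  using assms unfolding strong_odd_coloring_def by blast

lemma strong_odd_coloring_if_inj_on_nbhd:
  assumes "\<And>u v. u \<in> V \<Longrightarrow> v \<in> V \<Longrightarrow> E u v \<Longrightarrow> col u \<noteq> col v"
    and "\<And>v. v \<in> V \<Longrightarrow> inj_on col (nbhd V E v)"
  shows "strong_odd_coloring V E col"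
  unfolding strong_odd_coloring_def
proof (intro conjI ballI impI allI)
  fix v c assume "v \<in> V"
  show "{u \<in> nbhd V E v. col u = c} = {} \<or> odd (card {u \<in> nbhd V E v. col u = c})"
  proof (cases "{u \<in> nbhd V E v. col u = c} = {}")
    case False
    then obtain x where x: "x \<in> nbhd V E v" "col x = c" by blast
    have "{u \<in> nbhd V E v. col u = c} = {x}"
      using x assms(2)[OF \<open>v \<in> V\<close>] by (auto simp: inj_on_def)
    then show ?thesis by simp
  qed simp
qed (use assms(1) in blast)

lemma strong_odd_coloring_if_inj_on:
  assumes "inj_on col V" "\<And>v. \<not> E v v"
  shows "strong_odd_coloring V E col"
proof (rule strong_odd_coloring_if_inj_on_nbhd)
  show "col u \<noteq> col v" if "u \<in> V" "v \<in> V" "E u v" for u v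
    using that assms by (metis inj_on_eq_iff)
  show "inj_on col (nbhd V E v)" for v
    using assms(1) by (rule inj_on_subset) (auto simp: nbhd_def)
qed

lemma chi_so_le:
  assumes "strong_odd_coloring V E col"
  shows "chi_so V E \<le> card (col ` V)"
  unfolding chi_so_def by (rule Least_le) (use assms in blast)

lemma strong_odd_coloring_card_exists:
  assumes "finite V" "\<And>v. \<not> E v v"
  shows "\<exists>col. strong_odd_coloring V E col \<and> card (col ` V) = card V"
proof -
  obtain col :: "'a \<Rightarrow> nat" where "inj_on col V"
    using finite_imp_inj_to_nat_seg[OF assms(1)] by blast
  then show ?thesis using strong_odd_coloring_if_inj_on assms(2) card_image by blast
qed

lemma chi_so_le_card:
  assumes "finite V" "\<And>v. \<not> E v v"
  shows "chi_so V E \<le> card V"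
  using strong_odd_coloring_card_exists[of V E, OF assms] chi_so_le by metis

lemma chi_so_attained:
  assumes "finite V" "\<And>v. \<not> E v v"
  obtains col where "strong_odd_coloring V E col" "card (col ` V) = chi_so V E"
proof -
  have "\<exists>m col. strong_odd_coloring V E col \<and> card (col ` V) = m"
    using strong_odd_coloring_card_exists[of V E, OF assms] by blast
  from LeastI_ex[OF this] show thesis using that unfolding chi_so_def by blast
qed

lemma chi_so_eq_card_if_inj:
  assumes "finite V" "\<And>v. \<not> E v v"
    and "\<And>col. strong_odd_coloring V E col \<Longrightarrow> inj_on col V"
  shows "chi_so V E = card V"
  by (metis assms chi_so_attained card_image)

lemma graph_compl_irrefl: "\<not> graph_compl V E v v"
  by (simp add: graph_compl_def)

lemma card_le_chi_so_mult_chi_so_compl: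
  assumes "finite V" "\<And>v. \<not> E v v"
  shows "card V \<le> chi_so V E * chi_so V (graph_compl V E)"
proof -
  obtain c1 where c1: "strong_odd_coloring V E c1" "card (c1 ` V) = chi_so V E"
    using chi_so_attained[of V E, OF assms] .
  obtain c2 where c2: "strong_odd_coloring V (graph_compl V E) c2"
      "card (c2 ` V) = chi_so V (graph_compl V E)"
    using chi_so_attained[of V "graph_compl V E", OF assms(1) graph_compl_irrefl] .
  have "inj_on (\<lambda>v. (c1 v, c2 v)) V"
  proof (rule inj_onI, rule ccontr)
    fix u v assume uv: "u \<in> V" "v \<in> V" "(c1 u, c2 u) = (c1 v, c2 v)" "u \<noteq> v"
    then have "\<not> E u v" using strong_odd_coloring_proper[OF c1(1)] by auto
    then have "graph_compl V E u v" using uv by (simp add: graph_compl_def)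
    then show False using strong_odd_coloring_proper[OF c2(1)] uv by auto
  qed
  then have "card V = card ((\<lambda>v. (c1 v, c2 v)) ` V)" by (simp add: card_image)
  also have "\<dots> \<le> card (c1 ` V \<times> c2 ` V)"
    by (rule card_mono) (use assms(1) in auto)
  also have "\<dots> = chi_so V E * chi_so V (graph_compl V E)"
    by (simp add: card_cartesian_product c1 c2)
  finally show ?thesis .
qed

lemma double_le_chi_so_add_chi_so_compl:
  assumes "finite V" "\<And>v. \<not> E v v" "m * m \<le> card V"
  shows "2 * m \<le> chi_so V E + chi_so V (graph_compl V E)"
  using double_le_add_if_square_le_mult card_le_chi_so_mult_chi_so_compl[of V E] assms
  by (meson le_trans)

lemma chi_so_add_chi_so_compl_le:
  assumes "finite V" "\<And>v. \<not> E v v"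
  shows "chi_so V E + chi_so V (graph_compl V E) \<le> 2 * card V"
  using chi_so_le_card[of V E] chi_so_le_card[of V "graph_compl V E"] assms graph_compl_irrefl
  by fastforce

lemma chi_so_mult_chi_so_compl_le:
  assumes "finite V" "\<And>v. \<not> E v v"
  shows "chi_so V E * chi_so V (graph_compl V E) \<le> (card V)\<^sup>2"
  using mult_le_mono[OF chi_so_le_card[of V E] chi_so_le_card[of V "graph_compl V E"]]
  by (simp add: assms graph_compl_irrefl power2_eq_square)

locale grid =
  fixes V :: "'a set" and m :: nat and row column :: "'a \<Rightarrow> nat"
  assumes bij_cells: "bij_betw (\<lambda>x. (row x, column x)) V ({..<m} \<times> {..<m})"
begin

lemma grid_swap: "grid V m column row"
proof
  have "bij_betw prod.swap ({..<m} \<times> {..<m}) ({..<m} \<times> {..<m})"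
    by (simp add: bij_betw_def inj_on_def product_swap)
  from bij_betw_trans[OF bij_cells this]
  show "bij_betw (\<lambda>x. (column x, row x)) V ({..<m} \<times> {..<m})"
    by (simp add: comp_def)
qed

lemma finite_V: "finite V"
  using bij_betw_finite[OF bij_cells] by simp

lemma card_V: "card V = m * m"
  using bij_betw_same_card[OF bij_cells] by simp

lemma row_less: "x \<in> V \<Longrightarrow> row x < m"
  and column_less: "x \<in> V \<Longrightarrow> column x < m"
  using bij_betw_apply[OF bij_cells] by auto

lemma cell_eqI:
  "x \<in> V \<Longrightarrow> y \<in> V \<Longrightarrow> row x = row y \<Longrightarrow> column x = column y \<Longrightarrow> x = y"
  using bij_betw_imp_inj_on[OF bij_cells] by (auto dest: inj_onD)

lemma cell_exists:
  assumes "a < m" "b < m"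
  obtains w where "w \<in> V" "row w = a" "column w = b"
proof -
  have "(a, b) \<in> (\<lambda>x. (row x, column x)) ` V"
    using assms bij_betw_imp_surj_on[OF bij_cells] by auto
  then show thesis using that by auto
qed

lemma card_row:
  assumes "a < m"
  shows "card {x \<in> V. row x = a} = m"
proof -
  have "bij_betw column {x \<in> V. row x = a} {..<m}"
  proof (rule bij_betw_imageI)
    show "inj_on column {x \<in> V. row x = a}" by (rule inj_onI) (auto intro: cell_eqI)
    show "column ` {x \<in> V. row x = a} = {..<m}"
      using column_less by (auto intro: cell_exists[OF assms] simp: image_iff)
  qed
  then show ?thesis by (simp add: bij_betw_same_card)
qed

text \<open>The disjoint union of $m$ copies of $K_m$, one per row; its complement is the
  complete $m$-partite graph $K_{m,\dots,m}$.\<close>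
definition row_graph :: "'a \<Rightarrow> 'a \<Rightarrow> bool" where
  "row_graph u v \<longleftrightarrow> u \<in> V \<and> v \<in> V \<and> u \<noteq> v \<and> row u = row v"

lemma row_graph_simple: "simple_graph V row_graph"
  using finite_V by (auto simp: simple_graph_def row_graph_def)

lemma strong_odd_coloring_row_graph: "strong_odd_coloring V row_graph column"
proof (rule strong_odd_coloring_if_inj_on_nbhd)
  show "column u \<noteq> column v" if "u \<in> V" "v \<in> V" "row_graph u v" for u v
    using that cell_eqI by (auto simp: row_graph_def)
  show "inj_on column (nbhd V row_graph v)" for v
    by (rule inj_onI) (auto simp: nbhd_def row_graph_def intro: cell_eqI)
qed

lemma strong_odd_coloring_compl_row_graph:
  assumes "odd m"
  shows "strong_odd_coloring V (graph_compl V row_graph) row"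
  unfolding strong_odd_coloring_def
proof (intro conjI ballI impI allI)
  show "row u \<noteq> row v" if "graph_compl V row_graph u v" for u v
    using that by (auto simp: graph_compl_def row_graph_def)
next
  fix v c assume "v \<in> V"
  let ?B = "{u \<in> nbhd V (graph_compl V row_graph) v. row u = c}"
  show "?B = {} \<or> odd (card ?B)"
  proof (cases "c = row v \<or> c \<ge> m")
    case True
    then have "?B = {}"
      using row_less by (fastforce simp: nbhd_def graph_compl_def row_graph_def)
    then show ?thesis by simp
  next
    case False
    then have "?B = {x \<in> V. row x = c}" using \<open>v \<in> V\<close>
      by (auto simp: nbhd_def graph_compl_def row_graph_def)
    then show ?thesis using card_row[of c] False assms by simp
  qed
qed

lemma chi_so_row_graph:
  assumes "odd m"
  shows "chi_so V row_graph = m \<and> chi_so V (graph_compl V row_graph) = m"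
proof (rule eq_if_square_le_mult)
  have "card (column ` V) \<le> m" "card (row ` V) \<le> m"
    using card_mono[of "{..<m}" "column ` V"] card_mono[of "{..<m}" "row ` V"]
      row_less column_less by auto
  then show "chi_so V row_graph \<le> m" "chi_so V (graph_compl V row_graph) \<le> m"
    using chi_so_le[OF strong_odd_coloring_row_graph]
      chi_so_le[OF strong_odd_coloring_compl_row_graph[OF assms]] by linarith+
  show "m * m \<le> chi_so V row_graph * chi_so V (graph_compl V row_graph)"
    using card_le_chi_so_mult_chi_so_compl[of V row_graph] finite_V card_V
    by (simp add: row_graph_def)
qed

definition rook_graph :: "'a \<Rightarrow> 'a \<Rightarrow> bool" where
  "rook_graph u v \<longleftrightarrow>
     u \<in> V \<and> v \<in> V \<and> u \<noteq> v \<and> (row u = row v \<or> column u = column v)"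

lemma rook_graph_simple: "simple_graph V rook_graph"
  using finite_V by (auto simp: simple_graph_def rook_graph_def)

lemma rook_graph_swap: "grid.rook_graph V column row = rook_graph"
  unfolding grid.rook_graph_def[OF grid_swap] rook_graph_def by blast

lemma compl_rook_graph_iff:
  "graph_compl V rook_graph u v \<longleftrightarrow>
     u \<in> V \<and> v \<in> V \<and> row u \<noteq> row v \<and> column u \<noteq> column v"
  by (auto simp: graph_compl_def rook_graph_def)

text \<open>If $u \neq v$ share a colour, the vertex $w$ in the row of $u$ and the column of $v$
  sees exactly $u$ and $v$ in that colour: any other such neighbour would be adjacent to one
  of them.\<close>
lemma inj_on_rook_graph_coloring:
  assumes col: "strong_odd_coloring V rook_graph col"
  shows "inj_on col V"
proof (rule inj_onI, rule ccontr)
  fix u v assume uv: "u \<in> V" "v \<in> V" "col u = col v" "u \<noteq> v"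
  have proper: "col x \<noteq> col y" if "rook_graph x y" for x y
    using strong_odd_coloring_proper[OF col] that by (auto simp: rook_graph_def)
  have "\<not> rook_graph u v" using proper uv by blast
  then have distinct: "row u \<noteq> row v" "column u \<noteq> column v"
    using uv by (auto simp: rook_graph_def)
  obtain w where w: "w \<in> V" "row w = row u" "column w = column v"
    using cell_exists[OF row_less column_less] uv by metis
  have "{x \<in> nbhd V rook_graph w. col x = col u} = {u, v}"
  proof (intro equalityI subsetI)
    fix x assume "x \<in> {x \<in> nbhd V rook_graph w. col x = col u}"
    then have x: "x \<in> V" "rook_graph w x" "col x = col u" by (auto simp: nbhd_def)
    then have "row x = row u \<or> column x = column v" using w by (auto simp: rook_graph_def)
    then have "x = u \<or> rook_graph x u \<or> x = v \<or> rook_graph x v"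
      using x uv by (auto simp: rook_graph_def)
    then show "x \<in> {u, v}" using proper[of x u] proper[of x v] x uv by auto
  next
    show "x \<in> {x \<in> nbhd V rook_graph w. col x = col u}" if "x \<in> {u, v}" for x
      using that uv w distinct by (auto simp: nbhd_def rook_graph_def)
  qed
  then show False
    using strong_odd_coloring_odd[OF col w(1), of "col u"] uv by simp
qed

lemma compl_rook_coloring_class_in_row:
  assumes col: "strong_odd_coloring V (graph_compl V rook_graph) col"
    and uv: "u \<in> V" "v \<in> V" "u \<noteq> v" "row u = row v" "col u = col v"
    and x: "x \<in> V" "col x = col u"
  shows "row x = row u"
proof (rule ccontr)
  assume "row x \<noteq> row u"
  then have "column x = column u" "column x = column v"
    using strong_odd_coloring_proper[OF col, of x u] strong_odd_coloring_proper[OF col, of x v]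
      x uv by (auto simp: compl_rook_graph_iff)
  then show False using cell_eqI uv by metis
qed

lemma compl_rook_coloring_class_seen_from_other_row:
  assumes col: "strong_odd_coloring V (graph_compl V rook_graph) col"
    and uv: "u \<in> V" "v \<in> V" "u \<noteq> v" "row u = row v" "col u = col v"
    and w: "w \<in> V" "row w \<noteq> row u"
  shows "{x \<in> nbhd V (graph_compl V rook_graph) w. col x = col u}
    = {x \<in> V. col x = col u \<and> column x \<noteq> column w}"
  using compl_rook_coloring_class_in_row[OF col uv] w
  by (auto simp: nbhd_def compl_rook_graph_iff)

text \<open>Seen from a vertex $w$ of another row, the colour class $S$ of $u$ is $S$ minus its
  vertex in the column of $w$. Taking that column outside $S$ if $|S|$ is even ($|S| \neq m$, as
  $m$ is odd), and equal to the column of $u$ if $|S|$ is odd, $w$ sees an even nonzero number.\<close>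
lemma compl_rook_coloring_inj_on_row:
  assumes col: "strong_odd_coloring V (graph_compl V rook_graph) col" and "odd m"
    and uv: "u \<in> V" "v \<in> V" "row u = row v" "col u = col v"
  shows "u = v"
proof (rule ccontr)
  assume "u \<noteq> v"
  note uv = uv(1,2) this uv(3,4)
  define S where "S = {x \<in> V. col x = col u}"
  have "u \<in> S" "v \<in> S" using uv by (auto simp: S_def)
  have finite_S: "finite S" using finite_V by (simp add: S_def)
  have inj_S: "inj_on column S"
    using compl_rook_coloring_class_in_row[OF col uv]
    by (intro inj_onI) (auto simp: S_def intro: cell_eqI)
  have column_S: "column ` S \<subseteq> {..<m}" using column_less by (auto simp: S_def)
  have "column u \<noteq> column v" using uv cell_eqI by blast
  moreover have "column u < m" "column v < m" using column_less uv(1,2) by auto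
  ultimately have "1 < m" by linarith
  then obtain a where a: "a < m" "a \<noteq> row u"
    using that[of 0] that[of 1] by (cases "row u = 0") auto
  have seen: "{x \<in> nbhd V (graph_compl V rook_graph) w. col x = col u}
      = {x \<in> S. column x \<noteq> column w}" if "w \<in> V" "row w = a" for w
    using compl_rook_coloring_class_seen_from_other_row[OF col uv that(1)] that a
    by (simp add: S_def)
  obtain w where w: "w \<in> V" "row w = a"
    and "even (card {x \<in> S. column x \<noteq> column w})"
      "{x \<in> S. column x \<noteq> column w} \<noteq> {}"
  proof (cases "even (card S)")
    case True
    then have "column ` S \<noteq> {..<m}" using card_image[OF inj_S] \<open>odd m\<close> by auto
    then obtain b where "b < m" "b \<notin> column ` S" using column_S by blast
    obtain w where w: "w \<in> V" "row w = a" "column w = b"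
      using cell_exists[OF a(1) \<open>b < m\<close>] by metis
    have "{x \<in> S. column x \<noteq> column w} = S"
      using \<open>b \<notin> column ` S\<close> w(3) by (auto simp: image_iff)
    then show thesis using that[OF w(1,2)] True \<open>u \<in> S\<close> by auto
  next
    case False
    obtain w where w: "w \<in> V" "row w = a" "column w = column u"
      using cell_exists[OF a(1) column_less[OF uv(1)]] by metis
    have "{x \<in> S. column x \<noteq> column w} = S - {u}"
      using inj_S \<open>u \<in> S\<close> w(3) by (auto simp: inj_on_def)
    moreover have "card (S - {u}) = card S - 1" "card S > 0"
      using \<open>u \<in> S\<close> finite_S by (auto simp: card_gt_0_iff)
    moreover have "v \<in> S - {u}" using \<open>v \<in> S\<close> uv(3) by simp
    ultimately show thesis using that[OF w(1,2)] False by auto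
  qed
  then show False using strong_odd_coloring_odd[OF col w(1), of "col u"] seen[OF w] by simp
qed

lemma inj_on_compl_rook_graph_coloring:
  assumes col: "strong_odd_coloring V (graph_compl V rook_graph) col" and "odd m"
  shows "inj_on col V"
proof (rule inj_onI)
  fix u v assume uv: "u \<in> V" "v \<in> V" "col u = col v"
  then have "\<not> graph_compl V rook_graph u v" using strong_odd_coloring_proper[OF col] by blast
  then have "row u = row v \<or> column u = column v" using uv by (simp add: compl_rook_graph_iff)
  moreover note compl_rook_coloring_inj_on_row[OF col \<open>odd m\<close> uv(1,2)]
    grid.compl_rook_coloring_inj_on_row[OF grid_swap, unfolded rook_graph_swap,
      OF col \<open>odd m\<close> uv(1,2)]
  ultimately show "u = v" using uv(3) by blast
qed

lemma chi_so_rook_graph: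
  assumes "odd m"
  shows "chi_so V rook_graph = m * m \<and> chi_so V (graph_compl V rook_graph) = m * m"
proof
  show "chi_so V rook_graph = m * m"
    using chi_so_eq_card_if_inj[OF finite_V _ inj_on_rook_graph_coloring] card_V
    by (simp add: rook_graph_def)
  show "chi_so V (graph_compl V rook_graph) = m * m"
    using chi_so_eq_card_if_inj[of V "graph_compl V rook_graph", OF finite_V graph_compl_irrefl
        inj_on_compl_rook_graph_coloring[OF _ assms]] card_V
    by simp
qed

end

lemma grid_div_mod:
  fixes m :: nat
  assumes "0 < m"
  shows "grid {..<m * m} m (\<lambda>x. x div m) (\<lambda>x. x mod m)"
proof
  show "bij_betw (\<lambda>x. (x div m, x mod m)) {..<m * m} ({..<m} \<times> {..<m})"
  proof (rule bij_betw_imageI)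
    show "inj_on (\<lambda>x. (x div m, x mod m)) {..<m * m}"
      by (rule inj_onI) (metis div_mult_mod_eq prod.inject)
    have "(a, b) \<in> (\<lambda>x. (x div m, x mod m)) ` {..<m * m}" if "a < m" "b < m" for a b
    proof (rule image_eqI)
      show "(a, b) = ((a * m + b) div m, (a * m + b) mod m)" using that by simp
      have "a * m + b < (a + 1) * m" using that by simp
      also have "\<dots> \<le> m * m" using that by (intro mult_le_mono1) simp
      finally show "a * m + b \<in> {..<m * m}" by simp
    qed
    then show "(\<lambda>x. (x div m, x mod m)) ` {..<m * m} = {..<m} \<times> {..<m}"
      using assms by (auto simp: less_mult_imp_div_less)
  qed
qed

theorem theorem4p6:
  fixes k n :: nat
  assumes "n = (2 * k + 1) ^ 2"
  shows
    "(\<exists>E :: nat \<Rightarrow> nat \<Rightarrow> bool. simple_graph {..<n} E \<and>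
        chi_so {..<n} E = 2 * k + 1 \<and> chi_so {..<n} (graph_compl {..<n} E) = 2 * k + 1)
   \<and> (\<exists>E :: nat \<Rightarrow> nat \<Rightarrow> bool. simple_graph {..<n} E \<and>
        chi_so {..<n} E = n \<and> chi_so {..<n} (graph_compl {..<n} E) = n)
   \<and> (\<forall>(V :: 'a set) E. simple_graph V E \<and> card V = n \<longrightarrow>
        2 * (2 * k + 1) \<le> chi_so V E + chi_so V (graph_compl V E) \<and>
        chi_so V E + chi_so V (graph_compl V E) \<le> 2 * n \<and>
        n \<le> chi_so V E * chi_so V (graph_compl V E) \<and>
        chi_so V E * chi_so V (graph_compl V E) \<le> n ^ 2)
   \<and> (\<exists>E :: nat \<Rightarrow> nat \<Rightarrow> bool. simple_graph {..<n} E \<and>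
        chi_so {..<n} E + chi_so {..<n} (graph_compl {..<n} E) = 2 * (2 * k + 1))
   \<and> (\<exists>E :: nat \<Rightarrow> nat \<Rightarrow> bool. simple_graph {..<n} E \<and>
        chi_so {..<n} E + chi_so {..<n} (graph_compl {..<n} E) = 2 * n)
   \<and> (\<exists>E :: nat \<Rightarrow> nat \<Rightarrow> bool. simple_graph {..<n} E \<and>
        chi_so {..<n} E * chi_so {..<n} (graph_compl {..<n} E) = n)
   \<and> (\<exists>E :: nat \<Rightarrow> nat \<Rightarrow> bool. simple_graph {..<n} E \<and>
        chi_so {..<n} E * chi_so {..<n} (graph_compl {..<n} E) = n ^ 2)"
proof -
  define m where "m = 2 * k + 1"
  have "0 < m" "odd m" by (simp_all add: m_def)
  have n: "n = m * m" using assms by (simp add: m_def power2_eq_square)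
  interpret G: grid "{..<n}" m "\<lambda>x. x div m" "\<lambda>x. x mod m"
    using grid_div_mod[OF \<open>0 < m\<close>] n by simp
  note H1 = G.row_graph_simple G.chi_so_row_graph[OF \<open>odd m\<close>]
  note H2 = G.rook_graph_simple G.chi_so_rook_graph[OF \<open>odd m\<close>, folded n]
  have bounds: "2 * m \<le> chi_so V E + chi_so V (graph_compl V E) \<and>
      chi_so V E + chi_so V (graph_compl V E) \<le> 2 * n \<and>
      n \<le> chi_so V E * chi_so V (graph_compl V E) \<and>
      chi_so V E * chi_so V (graph_compl V E) \<le> n\<^sup>2"
    if "simple_graph V E" "card V = n" for V :: "'a set" and E
  proof -
    have "finite V" "\<And>v. \<not> E v v" using that(1) by (auto simp: simple_graph_def)
    then show ?thesis
      using double_le_chi_so_add_chi_so_compl[of V E m] chi_so_add_chi_so_compl_le[of V E]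
        card_le_chi_so_mult_chi_so_compl[of V E] chi_so_mult_chi_so_compl_le[of V E] that(2) n
      by simp
  qed
  show ?thesis
    unfolding m_def[symmetric]
    using H1 H2 bounds n by (intro conjI) (blast | metis mult_2 power2_eq_square)+
qed

end
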